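(* Let $G=(S,T,\pi)$ be a countable two-person win-lose game such that every set in $\mathcal{B}^2(G)$ is finite, and assume $G$ is LNG-free. Then the infima below are attained and $$\sup_{\mathbf{p}\in\Delta(S)}\min_{\mathbf{q}\in\Delta(T)}\pi^{\mathrm{mix}}(\mathbf{p},\mathbf{q})=1=\min_{\mathbf{q}\in\Delta(T)}\sup_{\mathbf{p}\in\Delta(S)}\pi^{\mathrm{mix}}(\mathbf{p},\mathbf{q}).$$
   Context: A two-person win-lose game is $G=(S,T,\pi)$ with non-empty $S,T$ and $\pi:S\times T\to\{0,1\}$; countable means $|S|=|T|=\aleph_0$. $\Delta(X)$ is the set of probability distributions on $X$ with at most countable support; $\pi^{\mathrm{mix}}(\mathbf{p},\mathbf{q})=\sum p_sq_t\pi(s,t)$. For $t\in T$, $B_t=\{s\in S:\pi(s,t)=0\}$ and $\mathcal{B}^2(G)=\{B_t:t\in T\}$. $G$ is LNG-free if there are no sequences of distinct $s_1,s_2,\ldots\in S$ and distinct $t_1,t_2,\ldots\in T$ with $\pi(s_i,t_j)=1\iff i\ge j$. *)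

theory Defs
  imports "HOL-Analysis.Analysis"
begin

text \<open>A two-person win-lose game (S, T, pi): strategy sets S, T and payoff
  pi : S x T -> {0,1}, represented as a boolean predicate (True = 1).\<close>

definition countable_game :: "'a set \<Rightarrow> 'b set \<Rightarrow> bool" where
  "countable_game S T \<longleftrightarrow> countable S \<and> infinite S \<and> countable T \<and> infinite T"

definition distr :: "'a set \<Rightarrow> ('a \<Rightarrow> real) set" where
  "distr X = {p. (\<forall>x. 0 \<le> p x) \<and> (\<forall>x. x \<notin> X \<longrightarrow> p x = 0)
                 \<and> countable {x. p x \<noteq> 0} \<and> (p has_sum 1) X}"

definition pimix :: "'a set \<Rightarrow> 'b set \<Rightarrow> ('a \<Rightarrow> 'b \<Rightarrow> bool)
                     \<Rightarrow> ('a \<Rightarrow> real) \<Rightarrow> ('b \<Rightarrow> real) \<Rightarrow> real" where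
  "pimix S T \<pi> p q = (\<Sum>\<^sub>\<infinity>(s,t)\<in>S \<times> T. p s * q t * of_bool (\<pi> s t))"

definition Bset :: "'a set \<Rightarrow> ('a \<Rightarrow> 'b \<Rightarrow> bool) \<Rightarrow> 'b \<Rightarrow> 'a set" where
  "Bset S \<pi> t = {s\<in>S. \<not> \<pi> s t}"

definition B2 :: "'a set \<Rightarrow> 'b set \<Rightarrow> ('a \<Rightarrow> 'b \<Rightarrow> bool) \<Rightarrow> 'a set set" where
  "B2 S T \<pi> = Bset S \<pi> ` T"

text \<open>LNG-free: no sequences of distinct s_i in S, distinct t_j in T with
  pi(s_i,t_j) = 1 iff i >= j (indices from 0 instead of 1, which is immaterial).\<close>
definition LNG_free :: "'a set \<Rightarrow> 'b set \<Rightarrow> ('a \<Rightarrow> 'b \<Rightarrow> bool) \<Rightarrow> bool" where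
  "LNG_free S T \<pi> \<longleftrightarrow> \<not> (\<exists>s :: nat \<Rightarrow> 'a. \<exists>t :: nat \<Rightarrow> 'b.
      inj s \<and> inj t \<and> range s \<subseteq> S \<and> range t \<subseteq> T \<and>
      (\<forall>i j. \<pi> (s i) (t j) \<longleftrightarrow> i \<ge> j))"

end

(*
  Against a column t, a mixed row strategy p wins with probability 1 - p(B t), so
  everything is about the p-masses of the finite sets B t.  LNG-freeness says exactly
  that there is no infinite strictly ascending chain of sets each contained in some
  B t: along such a chain one could read off an LNG ladder.  Well-founded induction
  upwards along these sets gives two facts.  First, sup_t p(B t) is attained, so the
  second player has a pure best reply to every p.  Second, for every \<epsilon> > 0 some
  finitely supported p has p(B t) \<le> \<epsilon> for all t: average many layers with disjoint
  supports, each diluted against the support of the earlier ones, so that a column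
  gets substantial mass from at most one layer; this induction runs over families of
  disjoint finite sets that a single B t meets simultaneously.  Finally, as S is infinite
  and the B t are finite, against any q the first player has a pure strategy outside the
  sets B t of finitely many columns carrying most of q, so sup_p \<pi>(p, q) = 1 for all q.
*)
theory Submission
  imports Defs
begin

section \<open>Mixed strategies and the mixed payoff\<close>

lemma distr_nonneg: "p \<in> distr X \<Longrightarrow> 0 \<le> p x"
  unfolding distr_def by auto

lemma distr_has_sum: "p \<in> distr X \<Longrightarrow> (p has_sum 1) X"
  unfolding distr_def by auto

lemma distr_sum_le_1:
  assumes "p \<in> distr X" "finite F" "F \<subseteq> X"
  shows "sum p F \<le> 1"
  using finite_sum_le_has_sum[OF distr_has_sum[OF assms(1)] assms(2,3)] distr_nonneg[OF assms(1)]
  by auto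

lemma indicator_singleton_in_distr:
  assumes "x \<in> X"
  shows "indicator {x} \<in> distr X"
proof -
  have "(indicator {x} has_sum (1::real)) X"
    by (rule has_sum_finite_neutralI[of "{x}"]) (use assms in auto)
  then show ?thesis
    using assms by (auto simp: distr_def indicator_def)
qed

lemma distr_nonempty:
  assumes "X \<noteq> {}"
  shows "distr X \<noteq> {}"
proof -
  from assms obtain x where "x \<in> X"
    by blast
  then have "indicator {x} \<in> distr X"
    by (rule indicator_singleton_in_distr)
  then show ?thesis
    by blast
qed

definition weights_on :: "'a set \<Rightarrow> ('a \<Rightarrow> real) \<Rightarrow> bool" where
  "weights_on D r \<longleftrightarrow> finite D \<and> (\<forall>x. 0 \<le> r x) \<and> (\<forall>x. x \<notin> D \<longrightarrow> r x = 0)"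

lemma weights_on_indicator: "weights_on {x} (indicator {x})"
  by (simp add: weights_on_def)

lemma weights_on_sum_le:
  assumes "weights_on D r" "finite G"
  shows "sum r G \<le> sum r D"
proof -
  have "sum r G = sum r (G \<inter> D)"
    using assms by (intro sum.mono_neutral_right) (auto simp: weights_on_def)
  also have "\<dots> \<le> sum r D"
    using assms by (intro sum_mono2) (auto simp: weights_on_def)
  finally show ?thesis .
qed

lemma weights_on_sum_superset:
  assumes "weights_on D r" "D \<subseteq> E" "finite E"
  shows "sum r E = sum r D"
  using assms by (intro sum.mono_neutral_right) (auto simp: weights_on_def)

lemma weights_on_in_distr:
  assumes "weights_on D p" "D \<subseteq> X" "sum p D = 1"
  shows "p \<in> distr X"
proof -
  have "{x. p x \<noteq> 0} \<subseteq> D"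
    using assms(1) by (auto simp: weights_on_def)
  then have "countable {x. p x \<noteq> 0}"
    using assms(1) by (auto simp: weights_on_def intro: countable_finite finite_subset)
  moreover have "(p has_sum 1) X"
    using assms by (intro has_sum_finite_neutralI[of D]) (auto simp: weights_on_def)
  ultimately show ?thesis
    using assms by (auto simp: distr_def weights_on_def)
qed

lemma distr_heavy_set_meets:
  assumes p: "p \<in> distr X" and "finite B" "B \<subseteq> X" "finite W" "W \<subseteq> X"
    and heavy: "1 - sum p W < sum p B"
  shows "B \<inter> W \<noteq> {}"
proof
  assume "B \<inter> W = {}"
  then have "sum p B + sum p W \<le> 1"
    using distr_sum_le_1[OF p, of "B \<union> W"] assms(2-5) by (simp add: sum.union_disjoint)
  with heavy show False
    by linarith
qed

lemma obtain_point_outside: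
  assumes "infinite S" "finite Z"
  obtains x where "x \<in> S - Z"
  using infinite_imp_nonempty[OF Diff_infinite_finite[OF assms(2,1)]] by blast

lemma Bset_subset: "Bset S \<pi> t \<subseteq> S"
  by (auto simp: Bset_def)

lemma distr_sum_Bset_bounds:
  assumes "p \<in> distr S" "finite (Bset S \<pi> t)"
  shows "0 \<le> sum p (Bset S \<pi> t)" "sum p (Bset S \<pi> t) \<le> 1"
  using distr_nonneg[OF assms(1)] distr_sum_le_1[OF assms Bset_subset] by (simp_all add: sum_nonneg)

lemma pimix_summable:
  assumes p: "p \<in> distr S" and q: "q \<in> distr T"
  shows "(\<lambda>(s, t). p s * q t * of_bool (\<pi> s t)) summable_on S \<times> T"
proof (rule nonneg_bdd_above_summable_on)
  let ?f = "\<lambda>(s, t). p s * q t * of_bool (\<pi> s t)"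
  show "0 \<le> ?f x" for x
    using distr_nonneg[OF p] distr_nonneg[OF q] by (auto split: prod.split)
  show "bdd_above (sum ?f ` {F. F \<subseteq> S \<times> T \<and> finite F})"
  proof (rule bdd_aboveI)
    fix y assume "y \<in> sum ?f ` {F. F \<subseteq> S \<times> T \<and> finite F}"
    then obtain F where F: "F \<subseteq> S \<times> T" "finite F" and y: "y = sum ?f F"
      by auto
    have "sum ?f F \<le> sum ?f (fst ` F \<times> snd ` F)"
      using F distr_nonneg[OF p] distr_nonneg[OF q]
      by (intro sum_mono2) (auto intro: rev_image_eqI)
    also have "\<dots> \<le> (\<Sum>(s, t)\<in>fst ` F \<times> snd ` F. p s * q t)"
      using distr_nonneg[OF p] distr_nonneg[OF q] by (intro sum_mono) auto
    also have "\<dots> = sum p (fst ` F) * sum q (snd ` F)"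
      by (simp add: sum_product sum.cartesian_product)
    also have "\<dots> \<le> 1"
      using F distr_sum_le_1[OF p, of "fst ` F"] distr_sum_le_1[OF q, of "snd ` F"]
        distr_nonneg[OF p] distr_nonneg[OF q]
      by (intro mult_le_one sum_nonneg) force+
    finally show "y \<le> 1"
      using y by simp
  qed
qed

lemma distr_has_sum_outside_Bset:
  assumes p: "p \<in> distr S" and fin: "finite (Bset S \<pi> t)"
  shows "((\<lambda>s. p s * of_bool (\<pi> s t)) has_sum 1 - sum p (Bset S \<pi> t)) S"
proof -
  have "(p has_sum sum p (Bset S \<pi> t)) (Bset S \<pi> t)"
    using fin by (rule has_sum_finiteI) simp
  then have "(p has_sum 1 - sum p (Bset S \<pi> t)) (S - Bset S \<pi> t)"
    by (rule has_sum_Diff[OF distr_has_sum[OF p]]) (auto simp: Bset_def)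
  then show ?thesis
    by (subst has_sum_cong_neutral[where g = p and T = "S - Bset S \<pi> t"]) (auto simp: Bset_def)
qed

lemma pimix_has_sum_Bset:
  assumes p: "p \<in> distr S" and q: "q \<in> distr T"
    and fin: "\<And>t. t \<in> T \<Longrightarrow> finite (Bset S \<pi> t)"
  shows "((\<lambda>t. q t * (1 - sum p (Bset S \<pi> t))) has_sum pimix S T \<pi> p q) T"
proof -
  have "((\<lambda>(s, t). p s * q t * of_bool (\<pi> s t)) has_sum pimix S T \<pi> p q) (S \<times> T)"
    unfolding pimix_def by (rule has_sum_infsum[OF pimix_summable[OF p q]])
  then have "((\<lambda>(t, s). p s * q t * of_bool (\<pi> s t)) has_sum pimix S T \<pi> p q) (T \<times> S)"
    by (subst (asm) has_sum_swap) (simp add: case_prod_unfold)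
  then show ?thesis
  proof (rule has_sum_SigmaD)
    fix t assume "t \<in> T"
    from has_sum_cmult_right[OF distr_has_sum_outside_Bset[OF p fin[OF this]], of "q t"]
    show "((\<lambda>s. (\<lambda>(t, s). p s * q t * of_bool (\<pi> s t)) (t, s))
        has_sum q t * (1 - sum p (Bset S \<pi> t))) S"
      by (simp add: mult_ac)
  qed
qed

lemma pimix_ge:
  assumes p: "p \<in> distr S" and q: "q \<in> distr T" and fin: "\<And>t. t \<in> T \<Longrightarrow> finite (Bset S \<pi> t)"
    and c: "\<And>t. t \<in> T \<Longrightarrow> sum p (Bset S \<pi> t) \<le> c"
  shows "1 - c \<le> pimix S T \<pi> p q"
proof (rule has_sum_mono[OF _ pimix_has_sum_Bset[OF p q fin]])
  show "((\<lambda>t. q t * (1 - c)) has_sum 1 - c) T"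
    using has_sum_cmult_left[OF distr_has_sum[OF q], of "1 - c"] by simp
  show "q t * (1 - c) \<le> q t * (1 - sum p (Bset S \<pi> t))" if "t \<in> T" for t
    using c[OF that] distr_nonneg[OF q] by (simp add: mult_left_mono)
qed

lemma pimix_le_1:
  assumes p: "p \<in> distr S" and q: "q \<in> distr T" and fin: "\<And>t. t \<in> T \<Longrightarrow> finite (Bset S \<pi> t)"
  shows "pimix S T \<pi> p q \<le> 1"
proof (rule has_sum_mono[OF pimix_has_sum_Bset[OF p q fin] distr_has_sum[OF q]])
  show "q t * (1 - sum p (Bset S \<pi> t)) \<le> q t" if "t \<in> T" for t
    using distr_sum_Bset_bounds[OF p fin[OF that]] distr_nonneg[OF q, of t]
    by (simp add: mult_left_le)
qed

lemma pimix_nonneg: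
  assumes p: "p \<in> distr S" and q: "q \<in> distr T" and fin: "\<And>t. t \<in> T \<Longrightarrow> finite (Bset S \<pi> t)"
  shows "0 \<le> pimix S T \<pi> p q"
  using pimix_ge[OF p q fin, of 1] distr_sum_Bset_bounds(2)[OF p fin] by simp

lemma pimix_indicator_right:
  assumes p: "p \<in> distr S" and fin: "\<And>t. t \<in> T \<Longrightarrow> finite (Bset S \<pi> t)" and "t0 \<in> T"
  shows "pimix S T \<pi> p (indicator {t0}) = 1 - sum p (Bset S \<pi> t0)"
proof -
  have "((\<lambda>t. indicator {t0} t * (1 - sum p (Bset S \<pi> t))) has_sum 1 - sum p (Bset S \<pi> t0)) T"
    using \<open>t0 \<in> T\<close> by (intro has_sum_finite_neutralI[of "{t0}"]) auto
  then show ?thesis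
    using pimix_has_sum_Bset[OF p indicator_singleton_in_distr[OF \<open>t0 \<in> T\<close>] fin] has_sum_unique
    by blast
qed

lemma sum_le_pimix:
  assumes p: "p \<in> distr S" and q: "q \<in> distr T" and fin: "\<And>t. t \<in> T \<Longrightarrow> finite (Bset S \<pi> t)"
    and W: "finite W" "W \<subseteq> T" and avoid: "\<And>t. t \<in> W \<Longrightarrow> sum p (Bset S \<pi> t) = 0"
  shows "sum q W \<le> pimix S T \<pi> p q"
proof (rule has_sum_mono[OF _ pimix_has_sum_Bset[OF p q fin]])
  show "((\<lambda>t. if t \<in> W then q t else 0) has_sum sum q W) T"
    using W by (intro has_sum_finite_neutralI[of W]) auto
  show "(if t \<in> W then q t else 0) \<le> q t * (1 - sum p (Bset S \<pi> t))" if "t \<in> T" for t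
    using avoid distr_sum_Bset_bounds[OF p fin[OF that]] distr_nonneg[OF q, of t]
    by (auto intro: mult_nonneg_nonneg)
qed

section \<open>No ascending chains below the sets B t\<close>

lemma not_LNG_freeI:
  fixes s :: "nat \<Rightarrow> 'a" and t :: "nat \<Rightarrow> 'b"
  assumes "range s \<subseteq> S" "range t \<subseteq> T" and pattern: "\<And>i j. \<pi> (s i) (t j) \<longleftrightarrow> j \<le> i"
  shows "\<not> LNG_free S T \<pi>"
proof -
  have "inj s"
  proof (rule injI)
    fix i j assume "s i = s j"
    then have "\<pi> (s j) (t i) \<and> \<pi> (s i) (t j)"
      using pattern[of i i] pattern[of j j] by simp
    then show "i = j"
      using pattern[of j i] pattern[of i j] by auto
  qed
  moreover have "inj t"
  proof (rule injI)
    fix i j assume "t i = t j"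
    then have "\<pi> (s i) (t j) \<and> \<pi> (s j) (t i)"
      using pattern[of i i] pattern[of j j] by simp
    then show "i = j"
      using pattern[of j i] pattern[of i j] by auto
  qed
  ultimately show ?thesis
    unfolding LNG_free_def not_not
    using assms by (intro exI[of _ s] exI[of _ t]) simp
qed

lemma strict_chain_escapes_finite:
  assumes chain: "\<And>k. A k \<subset> A (Suc k)" and A_finite: "\<And>k. finite (A k)" and "finite W"
  shows "\<exists>m>k. \<not> A m \<subseteq> W"
proof -
  have card_A: "k \<le> card (A k)" for k
  proof (induction k)
    case (Suc k)
    then show ?case
      using psubset_card_mono[OF A_finite chain, of k] by simp
  qed simp
  let ?m = "Suc (max k (card W))"
  have "card W < card (A ?m)"
    using card_A[of ?m] by linarith
  then have "\<not> A ?m \<subseteq> W"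
    using card_mono[OF \<open>finite W\<close>, of "A ?m"] by linarith
  then show ?thesis
    by (intro exI[of _ ?m]) simp
qed

text \<open>Along the chain, pick indices k0 < k1 < ... such that A(k(j+1)) escapes all of
  B(\<tau> 0), ..., B(\<tau> kj); a new point of A(k(j+1)) and the column \<tau> kj then form the
  j-th row and column of a ladder.\<close>
lemma not_LNG_free_if_strict_chain:
  assumes fin: "\<And>t. t \<in> T \<Longrightarrow> finite (Bset S \<pi> t)"
    and chain: "\<And>k. A k \<subset> A (Suc k)"
    and \<tau>: "\<And>k. \<tau> k \<in> T" "\<And>k. A k \<subseteq> Bset S \<pi> (\<tau> k)"
  shows "\<not> LNG_free S T \<pi>"
proof -
  define W where "W k = (\<Union>i\<le>k. Bset S \<pi> (\<tau> i))" for k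
  have "finite (A k)" for k
    using finite_subset[OF \<tau>(2) fin[OF \<tau>(1)]] .
  moreover have "finite (W k)" for k
    using fin \<tau>(1) by (simp add: W_def)
  ultimately have "\<exists>m>k. \<not> A m \<subseteq> W k" for k
    using strict_chain_escapes_finite[of A, OF chain] by blast
  then obtain jump where jump: "\<And>k. k < jump k" "\<And>k. \<not> A (jump k) \<subseteq> W k"
    by metis
  define \<kappa> where "\<kappa> j = (jump ^^ j) 0" for j
  have \<kappa>_Suc: "\<kappa> (Suc j) = jump (\<kappa> j)" for j
    by (simp add: \<kappa>_def)
  have "strict_mono \<kappa>"
    by (rule strict_monoI_Suc) (simp add: \<kappa>_Suc jump(1))
  then have \<kappa>_mono: "\<kappa> i \<le> \<kappa> j" if "i \<le> j" for i j
    using that strict_mono_less_eq by blast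
  have "mono A"
    unfolding mono_iff_le_Suc using chain by blast
  then have A_mono: "A i \<subseteq> A j" if "i \<le> j" for i j
    using that by (simp add: monoD)
  have "\<exists>x. x \<in> A (\<kappa> (Suc j)) \<and> x \<notin> W (\<kappa> j)" for j
    using jump(2)[of "\<kappa> j"] unfolding \<kappa>_Suc by blast
  then obtain s where s: "\<And>j. s j \<in> A (\<kappa> (Suc j))" "\<And>j. s j \<notin> W (\<kappa> j)"
    by metis
  define t where "t j = \<tau> (\<kappa> j)" for j
  have s_S: "s j \<in> S" for j
    using s(1) \<tau>(2) Bset_subset[of S \<pi> "\<tau> (\<kappa> (Suc j))"] by blast
  show ?thesis
  proof (rule not_LNG_freeI)
    show "range s \<subseteq> S" "range t \<subseteq> T"
      using s_S \<tau>(1) by (auto simp: t_def)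
    fix i j
    show "\<pi> (s i) (t j) \<longleftrightarrow> j \<le> i"
    proof (cases "j \<le> i")
      case True
      then have "s i \<notin> Bset S \<pi> (t j)"
        using s(2)[of i] \<kappa>_mono[OF True] by (auto simp: W_def t_def)
      then show ?thesis
        using True s_S by (auto simp: Bset_def)
    next
      case False
      then have "s i \<in> Bset S \<pi> (t j)"
        using s(1)[of i] A_mono[OF \<kappa>_mono, of "Suc i" j] \<tau>(2)[of "\<kappa> j"] by (auto simp: t_def)
      then show ?thesis
        using False by (auto simp: Bset_def)
    qed
  qed
qed

definition Bset_extension :: "'a set \<Rightarrow> 'b set \<Rightarrow> ('a \<Rightarrow> 'b \<Rightarrow> bool) \<Rightarrow> ('a set \<times> 'a set) set" where
  "Bset_extension S T \<pi> = {(Y, X). X \<subset> Y \<and> (\<exists>t\<in>T. Y \<subseteq> Bset S \<pi> t)}"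

lemma wf_Bset_extension:
  assumes "LNG_free S T \<pi>" and fin: "\<And>t. t \<in> T \<Longrightarrow> finite (Bset S \<pi> t)"
  shows "wf (Bset_extension S T \<pi>)"
proof (rule ccontr)
  assume "\<not> ?thesis"
  then obtain A where A: "\<And>i. (A (Suc i), A i) \<in> Bset_extension S T \<pi>"
    unfolding wf_iff_no_infinite_down_chain by blast
  then have "\<forall>i. \<exists>t. t \<in> T \<and> A (Suc i) \<subseteq> Bset S \<pi> t"
    unfolding Bset_extension_def by blast
  then obtain \<tau> where "\<And>i. \<tau> i \<in> T" "\<And>i. A (Suc i) \<subseteq> Bset S \<pi> (\<tau> i)"
    by metis
  moreover have "\<And>i. A (Suc i) \<subset> A (Suc (Suc i))"
    using A unfolding Bset_extension_def by blast
  ultimately have "\<not> LNG_free S T \<pi>"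
    using not_LNG_free_if_strict_chain[OF fin, where A = "\<lambda>i. A (Suc i)"] by blast
  then show False
    using assms(1) by contradiction
qed

section \<open>Best replies of the second player\<close>

definition approaching :: "'a set \<Rightarrow> 'b set \<Rightarrow> ('a \<Rightarrow> 'b \<Rightarrow> bool) \<Rightarrow> ('a \<Rightarrow> real) \<Rightarrow> real \<Rightarrow> 'a set \<Rightarrow> bool" where
  "approaching S T \<pi> p \<sigma> A \<longleftrightarrow> (\<forall>\<eta>>0. \<exists>t\<in>T. A \<subseteq> Bset S \<pi> t \<and> \<sigma> - \<eta> < sum p (Bset S \<pi> t))"

text \<open>If every column stays below \<sigma>, a column t with A \<subseteq> B t and p(B t) close to \<sigma>
  carries mass close to \<sigma> - p(A) > 0 on B t - A, so B t - A meets any finite W of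
  p-mass near 1. Finitely many candidate points a \<in> W - A are available, so one of
  them works for arbitrarily good columns.\<close>
lemma approaching_insert:
  assumes p: "p \<in> distr S" and fin: "\<And>t. t \<in> T \<Longrightarrow> finite (Bset S \<pi> t)"
    and below: "\<And>t. t \<in> T \<Longrightarrow> sum p (Bset S \<pi> t) < \<sigma>"
    and A: "approaching S T \<pi> p \<sigma> A"
  shows "\<exists>a. a \<notin> A \<and> approaching S T \<pi> p \<sigma> (insert a A)"
proof (rule ccontr)
  assume not_approaching: "\<nexists>a. a \<notin> A \<and> approaching S T \<pi> p \<sigma> (insert a A)"
  let ?v = "\<lambda>t. sum p (Bset S \<pi> t)"
  obtain t1 where t1: "t1 \<in> T" "A \<subseteq> Bset S \<pi> t1"
    using A unfolding approaching_def by (meson zero_less_one)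
  then have "sum p A \<le> ?v t1"
    using fin distr_nonneg[OF p] by (intro sum_mono2) auto
  define g where "g = \<sigma> - sum p A"
  have g: "g > 0"
    using below[OF t1(1)] \<open>sum p A \<le> ?v t1\<close> by (simp add: g_def)
  obtain W where W: "finite W" "W \<subseteq> S" "dist (sum p W) 1 \<le> g / 2"
    using has_sum_finite_approximation[OF distr_has_sum[OF p], of "g / 2"] g by auto
  have meets_W: "(Bset S \<pi> t - A) \<inter> W \<noteq> {}"
    if t: "t \<in> T" "A \<subseteq> Bset S \<pi> t" "\<sigma> - g / 2 < ?v t" for t
  proof (rule distr_heavy_set_meets[OF p _ _ W(1,2)])
    show "finite (Bset S \<pi> t - A)" "Bset S \<pi> t - A \<subseteq> S"
      using fin[OF t(1)] Bset_subset[of S \<pi> t] by auto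
    have "?v t = sum p (Bset S \<pi> t - A) + sum p A"
      by (rule sum.subset_diff[OF t(2) fin[OF t(1)]])
    then show "1 - sum p W < sum p (Bset S \<pi> t - A)"
      using t(3) W(3) g_def unfolding dist_real_def by linarith
  qed
  have "\<exists>\<eta>>0. \<forall>t\<in>T. insert a A \<subseteq> Bset S \<pi> t \<longrightarrow> ?v t \<le> \<sigma> - \<eta>" if "a \<in> W - A" for a
  proof -
    have "\<not> approaching S T \<pi> p \<sigma> (insert a A)"
      using not_approaching that by blast
    then show ?thesis
      unfolding approaching_def by (auto simp: not_less)
  qed
  then obtain \<eta>a where \<eta>a: "\<And>a. a \<in> W - A \<Longrightarrow> 0 < \<eta>a a"
    "\<And>a t. a \<in> W - A \<Longrightarrow> t \<in> T \<Longrightarrow> insert a A \<subseteq> Bset S \<pi> t \<Longrightarrow> ?v t \<le> \<sigma> - \<eta>a a"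
    by metis
  define \<eta> where "\<eta> = Min (insert (g / 2) (\<eta>a ` (W - A)))"
  have "0 < \<eta>"
    using W(1) g \<eta>a(1) by (auto simp: \<eta>_def)
  have "\<eta> \<le> g / 2" "\<And>a. a \<in> W - A \<Longrightarrow> \<eta> \<le> \<eta>a a"
    unfolding \<eta>_def using W(1) by (intro Min_le; simp)+
  moreover obtain t where t: "t \<in> T" "A \<subseteq> Bset S \<pi> t" "\<sigma> - \<eta> < ?v t"
    using A \<open>0 < \<eta>\<close> unfolding approaching_def by blast
  ultimately obtain a where "a \<in> Bset S \<pi> t - A" "a \<in> W"
    using meets_W[OF t(1,2)] by fastforce
  then show False
    using \<eta>a(2)[of a t] t \<open>\<And>a. a \<in> W - A \<Longrightarrow> \<eta> \<le> \<eta>a a\<close>[of a] by auto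
qed

lemma not_approaching:
  assumes "LNG_free S T \<pi>" and fin: "\<And>t. t \<in> T \<Longrightarrow> finite (Bset S \<pi> t)"
    and p: "p \<in> distr S" and below: "\<And>t. t \<in> T \<Longrightarrow> sum p (Bset S \<pi> t) < \<sigma>"
  shows "\<not> approaching S T \<pi> p \<sigma> A"
proof (induction A rule: wf_induct[OF wf_Bset_extension[OF assms(1) fin]])
  fix A :: "'a set"
  assume IH: "\<forall>Y. (Y, A) \<in> Bset_extension S T \<pi> \<longrightarrow> \<not> approaching S T \<pi> p \<sigma> Y"
  show "\<not> approaching S T \<pi> p \<sigma> A"
  proof
    assume A: "approaching S T \<pi> p \<sigma> A"
    obtain a where a: "a \<notin> A" "approaching S T \<pi> p \<sigma> (insert a A)"
      using approaching_insert[OF p fin below A] by blast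
    then obtain t where "t \<in> T" "insert a A \<subseteq> Bset S \<pi> t"
      using zero_less_one unfolding approaching_def by blast
    with a(1) have "(insert a A, A) \<in> Bset_extension S T \<pi>"
      unfolding Bset_extension_def by blast
    with IH a(2) show False
      by blast
  qed
qed

lemma Bset_mass_max_attained:
  assumes "LNG_free S T \<pi>" and fin: "\<And>t. t \<in> T \<Longrightarrow> finite (Bset S \<pi> t)"
    and p: "p \<in> distr S" and "T \<noteq> {}"
  shows "\<exists>t0\<in>T. \<forall>t\<in>T. sum p (Bset S \<pi> t) \<le> sum p (Bset S \<pi> t0)"
proof (rule ccontr)
  assume not_attained: "\<not> ?thesis"
  let ?v = "\<lambda>t. sum p (Bset S \<pi> t)"
  define \<sigma> where "\<sigma> = (SUP t\<in>T. ?v t)"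
  have bdd: "bdd_above (?v ` T)"
    using distr_sum_le_1[OF p fin Bset_subset] by (intro bdd_aboveI[of _ 1]) auto
  have below: "?v t < \<sigma>" if "t \<in> T" for t
  proof -
    have "\<not> (\<forall>t'\<in>T. ?v t' \<le> ?v t)"
      using not_attained that by blast
    then have "\<exists>t'\<in>T. ?v t < ?v t'"
      by (simp add: not_le)
    then obtain t' where "t' \<in> T" "?v t < ?v t'" ..
    then show ?thesis
      using cSUP_upper[OF \<open>t' \<in> T\<close> bdd] by (simp add: \<sigma>_def)
  qed
  have start: "approaching S T \<pi> p \<sigma> {}"
    unfolding approaching_def
  proof (intro allI impI)
    fix \<eta> :: real assume "0 < \<eta>"
    then have "\<sigma> - \<eta> < (SUP t\<in>T. ?v t)"
      by (simp add: \<sigma>_def)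
    then show "\<exists>t\<in>T. {} \<subseteq> Bset S \<pi> t \<and> \<sigma> - \<eta> < ?v t"
      by (simp add: less_cSUP_iff[OF \<open>T \<noteq> {}\<close> bdd])
  qed
  then show False
    using not_approaching[OF assms(1) fin p below] by blast
qed

section \<open>Families of sets hit by a single column\<close>

definition hits_all :: "'a set \<Rightarrow> 'a set set \<Rightarrow> bool" where
  "hits_all B \<A> \<longleftrightarrow> (\<forall>F\<in>\<A>. B \<inter> F \<noteq> {})"

definition hitting_extension :: "'a set \<Rightarrow> 'b set \<Rightarrow> ('a \<Rightarrow> 'b \<Rightarrow> bool) \<Rightarrow> ('a set set \<times> 'a set set) set" where
  "hitting_extension S T \<pi> = {(\<B>, \<A>). \<exists>D. \<B> = insert D \<A> \<and> D \<noteq> {} \<and> finite D \<and> D \<inter> \<Union>\<A> = {}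
      \<and> (\<exists>t\<in>T. hits_all (Bset S \<pi> t) \<B>)}"

lemma infinite_pigeonhole_hit:
  assumes "finite D" "infinite M" "\<And>m. m \<in> M \<Longrightarrow> B m \<inter> D \<noteq> {}"
  obtains a where "a \<in> D" "infinite {m\<in>M. a \<in> B m}"
proof -
  have "M \<subseteq> (\<Union>a\<in>D. {m\<in>M. a \<in> B m})"
    using assms(3) by blast
  then have "\<not> (\<forall>a\<in>D. finite {m\<in>M. a \<in> B m})"
    using assms(1,2) by (meson finite_UN_I finite_subset)
  then show ?thesis
    using that by blast
qed

text \<open>A K\<ouml>nig-type argument: a finite set A \<subseteq> D 0 \<union> ... \<union> D (j-1) lying in infinitely
  many of the columns \<tau> j, \<tau> (j+1), ... extends by a point of D j with the same property,
  which contradicts well-foundedness.\<close>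
lemma no_hitting_sequence:
  fixes D :: "nat \<Rightarrow> 'a set" and \<tau> :: "nat \<Rightarrow> 'b"
  assumes wf: "wf (Bset_extension S T \<pi>)"
    and fin_D: "\<And>i. finite (D i)"
    and disjoint: "\<And>i j. i < j \<Longrightarrow> D i \<inter> D j = {}"
    and \<tau>: "\<And>m. \<tau> m \<in> T" "\<And>i m. i \<le> m \<Longrightarrow> Bset S \<pi> (\<tau> m) \<inter> D i \<noteq> {}"
  shows False
proof -
  define M where "M A j = {m. j \<le> m \<and> A \<subseteq> Bset S \<pi> (\<tau> m)}" for A j
  have "\<forall>j. \<not> (A \<subseteq> (\<Union>i<j. D i) \<and> infinite (M A j))" for A
  proof (induction A rule: wf_induct[OF wf])
    fix A :: "'a set"
    assume IH: "\<forall>Y. (Y, A) \<in> Bset_extension S T \<pi> \<longrightarrow> (\<forall>j. \<not> (Y \<subseteq> (\<Union>i<j. D i) \<and> infinite (M Y j)))"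
    show "\<forall>j. \<not> (A \<subseteq> (\<Union>i<j. D i) \<and> infinite (M A j))"
    proof (intro allI notI)
      fix j assume A: "A \<subseteq> (\<Union>i<j. D i) \<and> infinite (M A j)"
      have "Bset S \<pi> (\<tau> m) \<inter> D j \<noteq> {}" if "m \<in> M A j" for m
        using that \<tau>(2) by (simp add: M_def)
      then obtain a where a: "a \<in> D j" "infinite {m\<in>M A j. a \<in> Bset S \<pi> (\<tau> m)}"
        using infinite_pigeonhole_hit[OF fin_D, of "M A j" "\<lambda>m. Bset S \<pi> (\<tau> m)"] A by blast
      have "a \<notin> A"
      proof
        assume "a \<in> A"
        then obtain i where "i < j" "a \<in> D i"
          using A by blast
        then show False
          using disjoint[of i j] a(1) by blast
      qed
      have "{m\<in>M A j. a \<in> Bset S \<pi> (\<tau> m)} \<subseteq> insert j (M (insert a A) (Suc j))"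
        by (auto simp: M_def)
      then have "infinite (M (insert a A) (Suc j))"
        using a(2) by (meson finite_insert finite_subset)
      then obtain m where "m \<in> M (insert a A) (Suc j)"
        using infinite_imp_nonempty by blast
      then have "(insert a A, A) \<in> Bset_extension S T \<pi>"
        using \<open>a \<notin> A\<close> \<tau>(1)[of m] unfolding Bset_extension_def M_def by blast
      moreover have "insert a A \<subseteq> (\<Union>i<Suc j. D i)"
        using A a(1) by (auto simp: lessThan_Suc)
      moreover note \<open>infinite (M (insert a A) (Suc j))\<close>
      ultimately show False
        using IH by blast
    qed
  qed
  moreover have "infinite (M {} 0)"
    by (simp add: M_def)
  ultimately show False
    by blast
qed

lemma wf_hitting_extension:
  assumes "LNG_free S T \<pi>" and fin: "\<And>t. t \<in> T \<Longrightarrow> finite (Bset S \<pi> t)"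
  shows "wf (hitting_extension S T \<pi>)"
proof (rule ccontr)
  assume "\<not> ?thesis"
  then obtain f where chain: "\<And>i. (f (Suc i), f i) \<in> hitting_extension S T \<pi>"
    unfolding wf_iff_no_infinite_down_chain by blast
  have "\<exists>D. f (Suc i) = insert D (f i) \<and> finite D \<and> D \<inter> \<Union>(f i) = {}" for i
    using chain[of i] by (auto simp: hitting_extension_def)
  then obtain D where D: "\<And>i. f (Suc i) = insert (D i) (f i)" "\<And>i. finite (D i)"
    "\<And>i. D i \<inter> \<Union>(f i) = {}"
    by metis
  have "\<exists>t. t \<in> T \<and> hits_all (Bset S \<pi> t) (f (Suc i))" for i
    using chain[of i] by (auto simp: hitting_extension_def)
  then obtain \<tau> where \<tau>: "\<And>i. \<tau> i \<in> T" "\<And>i. hits_all (Bset S \<pi> (\<tau> i)) (f (Suc i))"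
    by metis
  have "mono f"
    unfolding mono_iff_le_Suc using D(1) by blast
  then have D_in: "D i \<in> f m" if "i < m" for i m
    using that D(1)[of i] monoD[OF \<open>mono f\<close>, of "Suc i" m] by auto
  show False
  proof (rule no_hitting_sequence[OF wf_Bset_extension[OF assms] D(2)])
    show "D i \<inter> D j = {}" if "i < j" for i j
      using D(3)[of j] D_in[OF that] by blast
    show "Bset S \<pi> (\<tau> m) \<inter> D i \<noteq> {}" if "i \<le> m" for i m
      using \<tau>(2)[of m] D_in[of i "Suc m"] that by (auto simp: hits_all_def)
  qed (use \<tau>(1) in auto)
qed

section \<open>Diluted strategies of the first player\<close>

text \<open>For \<A> = {} this asks for \<epsilon>-optimal strategies of the first player; the family \<A>
  and the avoided set Z are what makes the property provable by induction.\<close>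
definition dilutable :: "'a set \<Rightarrow> 'b set \<Rightarrow> ('a \<Rightarrow> 'b \<Rightarrow> bool) \<Rightarrow> 'a set set \<Rightarrow> bool" where
  "dilutable S T \<pi> \<A> \<longleftrightarrow> (\<forall>\<epsilon>>0. \<forall>Z. finite Z \<longrightarrow> (\<exists>p D. weights_on D p \<and> D \<subseteq> S - Z \<and> sum p D = 1
      \<and> (\<forall>t\<in>T. hits_all (Bset S \<pi> t) \<A> \<longrightarrow> sum p (Bset S \<pi> t - \<Union>\<A>) \<le> \<epsilon>)))"

lemma dilutableD:
  assumes "dilutable S T \<pi> \<A>" "0 < \<epsilon>" "finite Z"
  shows "\<exists>p D. weights_on D p \<and> D \<subseteq> S - Z \<and> sum p D = 1
    \<and> (\<forall>t\<in>T. hits_all (Bset S \<pi> t) \<A> \<longrightarrow> sum p (Bset S \<pi> t - \<Union>\<A>) \<le> \<epsilon>)"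
  using assms unfolding dilutable_def by simp

lemma dilutable_if_no_hitting:
  assumes "infinite S" and "\<forall>t\<in>T. \<not> hits_all (Bset S \<pi> t) \<A>"
  shows "dilutable S T \<pi> \<A>"
  unfolding dilutable_def
proof (intro allI impI)
  fix \<epsilon> :: real and Z :: "'a set" assume "finite Z"
  then obtain x where "x \<in> S - Z"
    using obtain_point_outside[OF assms(1)] by blast
  then show "\<exists>p D. weights_on D p \<and> D \<subseteq> S - Z \<and> sum p D = 1
      \<and> (\<forall>t\<in>T. hits_all (Bset S \<pi> t) \<A> \<longrightarrow> sum p (Bset S \<pi> t - \<Union>\<A>) \<le> \<epsilon>)"
    using assms(2) weights_on_indicator by (intro exI[of _ "indicator {x}"] exI[of _ "{x}"]) auto
qed

lemma sum_stacked_weights_le: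
  fixes \<eta> :: real
  assumes r: "weights_on D r" and p: "weights_on D' p" "sum p D' = 1"
    and "finite G" "0 \<le> \<eta>"
    and old: "sum r G \<le> 1 + real k * \<eta>" and new: "G \<inter> D \<noteq> {} \<Longrightarrow> sum p G \<le> \<eta>"
  shows "sum (\<lambda>x. r x + p x) G \<le> 1 + real (Suc k) * \<eta>"
proof (cases "G \<inter> D = {}")
  case True
  then have "sum r G = 0"
    using r by (intro sum.neutral) (auto simp: weights_on_def)
  moreover have "sum p G \<le> 1"
    using weights_on_sum_le[OF p(1) \<open>finite G\<close>] p(2) by simp
  moreover have "0 \<le> real (Suc k) * \<eta>"
    using \<open>0 \<le> \<eta>\<close> by simp
  ultimately show ?thesis
    unfolding sum.distrib by linarith
next
  case False
  then show ?thesis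
    using old new by (simp add: sum.distrib algebra_simps)
qed

text \<open>Stack k+1 distributions with disjoint supports, each one diluted against the
  support D of the previous ones: a column meeting D gets mass at most \<eta> from the new
  layer, and a column missing D gets no mass from the old layers.\<close>
lemma dilutable_stack:
  fixes \<eta> :: real
  assumes S: "infinite S" and fin: "\<And>t. t \<in> T \<Longrightarrow> finite (Bset S \<pi> t)"
    and Z: "finite Z" "\<Union>\<A> \<subseteq> Z" and "0 < \<eta>"
    and ext: "\<And>D. D \<noteq> {} \<Longrightarrow> finite D \<Longrightarrow> D \<inter> \<Union>\<A> = {} \<Longrightarrow> dilutable S T \<pi> (insert D \<A>)"
  shows "\<exists>r D. weights_on D r \<and> D \<noteq> {} \<and> D \<subseteq> S - Z \<and> sum r D = real (Suc k)
      \<and> (\<forall>t\<in>T. hits_all (Bset S \<pi> t) \<A> \<longrightarrow> sum r (Bset S \<pi> t - \<Union>\<A>) \<le> 1 + real k * \<eta>)"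
proof (induction k)
  case 0
  obtain x where x: "x \<in> S - Z"
    using obtain_point_outside[OF S Z(1)] by blast
  have "sum (indicator {x}) (Bset S \<pi> t - \<Union>\<A>) \<le> (1::real)" if "t \<in> T" for t
    using weights_on_sum_le[OF weights_on_indicator, of "Bset S \<pi> t - \<Union>\<A>" x] fin[OF that] by simp
  then show ?case
    using x weights_on_indicator by (intro exI[of _ "indicator {x}"] exI[of _ "{x}"]) auto
next
  case (Suc k)
  then obtain r D where r: "weights_on D r" "D \<noteq> {}" "D \<subseteq> S - Z" "sum r D = real (Suc k)"
    and r_bound: "\<And>t. t \<in> T \<Longrightarrow> hits_all (Bset S \<pi> t) \<A> \<Longrightarrow> sum r (Bset S \<pi> t - \<Union>\<A>) \<le> 1 + real k * \<eta>"
    by blast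
  have "dilutable S T \<pi> (insert D \<A>)"
    using r Z(2) by (intro ext) (auto simp: weights_on_def)
  moreover have "finite (Z \<union> D)"
    using Z(1) r(1) by (simp add: weights_on_def)
  ultimately have "\<exists>p D'. weights_on D' p \<and> D' \<subseteq> S - (Z \<union> D) \<and> sum p D' = 1
      \<and> (\<forall>t\<in>T. hits_all (Bset S \<pi> t) (insert D \<A>) \<longrightarrow> sum p (Bset S \<pi> t - \<Union>(insert D \<A>)) \<le> \<eta>)"
    by (rule dilutableD[OF _ \<open>0 < \<eta>\<close>])
  then obtain p D' where p: "weights_on D' p" "D' \<subseteq> S - (Z \<union> D)" "sum p D' = 1"
    and p_bound: "\<And>t. t \<in> T \<Longrightarrow> hits_all (Bset S \<pi> t) (insert D \<A>)
        \<Longrightarrow> sum p (Bset S \<pi> t - \<Union>(insert D \<A>)) \<le> \<eta>"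
    by blast
  have D_finite: "finite (D \<union> D')"
    using r(1) p(1) by (simp add: weights_on_def)
  have "weights_on (D \<union> D') (\<lambda>x. r x + p x)"
    using r(1) p(1) by (auto simp: weights_on_def)
  moreover have "sum (\<lambda>x. r x + p x) (D \<union> D') = real (Suc (Suc k))"
    using weights_on_sum_superset[OF r(1) _ D_finite] weights_on_sum_superset[OF p(1) _ D_finite]
    by (simp add: sum.distrib r(4) p(3))
  moreover have "sum (\<lambda>x. r x + p x) (Bset S \<pi> t - \<Union>\<A>) \<le> 1 + real (Suc k) * \<eta>"
    if t: "t \<in> T" "hits_all (Bset S \<pi> t) \<A>" for t
  proof (rule sum_stacked_weights_le[OF r(1) p(1,3) _ _ r_bound[OF t]])
    show "finite (Bset S \<pi> t - \<Union>\<A>)"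
      using fin[OF t(1)] by simp
    show "0 \<le> \<eta>"
      using \<open>0 < \<eta>\<close> by simp
    assume "(Bset S \<pi> t - \<Union>\<A>) \<inter> D \<noteq> {}"
    then have "hits_all (Bset S \<pi> t) (insert D \<A>)"
      using t(2) by (auto simp: hits_all_def)
    moreover have "sum p (Bset S \<pi> t - \<Union>(insert D \<A>)) = sum p (Bset S \<pi> t - \<Union>\<A>)"
      using p(1,2) fin[OF t(1)] by (intro sum.mono_neutral_left) (auto simp: weights_on_def)
    ultimately show "sum p (Bset S \<pi> t - \<Union>\<A>) \<le> \<eta>"
      using p_bound[OF t(1)] by simp
  qed
  ultimately show ?case
    using r(2,3) p(2) by (intro exI[of _ "\<lambda>x. r x + p x"] exI[of _ "D \<union> D'"]) auto
qed

lemma dilutable_if_extensions_dilutable: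
  assumes S: "infinite S" and fin: "\<And>t. t \<in> T \<Longrightarrow> finite (Bset S \<pi> t)"
    and "finite (\<Union>\<A>)"
    and ext: "\<And>D. D \<noteq> {} \<Longrightarrow> finite D \<Longrightarrow> D \<inter> \<Union>\<A> = {} \<Longrightarrow> dilutable S T \<pi> (insert D \<A>)"
  shows "dilutable S T \<pi> \<A>"
  unfolding dilutable_def
proof (intro allI impI)
  fix \<epsilon> :: real and Z :: "'a set" assume "0 < \<epsilon>" "finite Z"
  define \<eta> where "\<eta> = \<epsilon> / 2"
  have "0 < \<eta>"
    using \<open>0 < \<epsilon>\<close> by (simp add: \<eta>_def)
  then obtain k where k: "inverse (real (Suc k)) < \<eta>"
    using reals_Archimedean by blast
  have "finite (Z \<union> \<Union>\<A>)" "\<Union>\<A> \<subseteq> Z \<union> \<Union>\<A>"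
    using \<open>finite Z\<close> assms(3) by auto
  from dilutable_stack[OF S fin this \<open>0 < \<eta>\<close> ext, of k]
  obtain r D where r: "weights_on D r" "D \<subseteq> S - (Z \<union> \<Union>\<A>)" "sum r D = real (Suc k)"
    and r_bound: "\<And>t. t \<in> T \<Longrightarrow> hits_all (Bset S \<pi> t) \<A> \<Longrightarrow> sum r (Bset S \<pi> t - \<Union>\<A>) \<le> 1 + real k * \<eta>"
    by blast
  define p where "p x = r x / real (Suc k)" for x
  have p_sum: "sum p G = sum r G / real (Suc k)" for G
    by (simp add: p_def sum_divide_distrib)
  have "sum p (Bset S \<pi> t - \<Union>\<A>) \<le> \<epsilon>" if "t \<in> T" "hits_all (Bset S \<pi> t) \<A>" for t
  proof -
    have "sum p (Bset S \<pi> t - \<Union>\<A>) \<le> (1 + real k * \<eta>) / real (Suc k)"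
      unfolding p_sum by (intro divide_right_mono r_bound that) simp
    also have "\<dots> = inverse (real (Suc k)) + real k / real (Suc k) * \<eta>"
      by (simp add: field_simps)
    also have "\<dots> \<le> inverse (real (Suc k)) + \<eta>"
      using \<open>0 < \<eta>\<close> by (intro add_left_mono mult_left_le_one_le) auto
    also have "\<dots> \<le> \<epsilon>"
      using k by (simp add: \<eta>_def)
    finally show ?thesis .
  qed
  moreover have "weights_on D p"
    using r(1) by (auto simp: weights_on_def p_def)
  ultimately show "\<exists>p D. weights_on D p \<and> D \<subseteq> S - Z \<and> sum p D = 1
      \<and> (\<forall>t\<in>T. hits_all (Bset S \<pi> t) \<A> \<longrightarrow> sum p (Bset S \<pi> t - \<Union>\<A>) \<le> \<epsilon>)"
    using r(2,3) p_sum[of D] by (intro exI[of _ p] exI[of _ D]) auto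
qed

lemma dilutable_all:
  assumes lng: "LNG_free S T \<pi>" and fin: "\<And>t. t \<in> T \<Longrightarrow> finite (Bset S \<pi> t)"
    and S: "infinite S"
  shows "finite (\<Union>\<A>) \<longrightarrow> dilutable S T \<pi> \<A>"
proof (induction \<A> rule: wf_induct[OF wf_hitting_extension[OF lng fin]])
  fix \<A> :: "'a set set"
  assume IH: "\<forall>\<B>. (\<B>, \<A>) \<in> hitting_extension S T \<pi> \<longrightarrow> finite (\<Union>\<B>) \<longrightarrow> dilutable S T \<pi> \<B>"
  show "finite (\<Union>\<A>) \<longrightarrow> dilutable S T \<pi> \<A>"
  proof
    assume "finite (\<Union>\<A>)"
    show "dilutable S T \<pi> \<A>"
    proof (rule dilutable_if_extensions_dilutable[OF S fin \<open>finite (\<Union>\<A>)\<close>])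
      fix D assume D: "D \<noteq> {}" "finite D" "D \<inter> \<Union>\<A> = {}"
      show "dilutable S T \<pi> (insert D \<A>)"
      proof (cases "\<exists>t\<in>T. hits_all (Bset S \<pi> t) (insert D \<A>)")
        case True
        with D have "(insert D \<A>, \<A>) \<in> hitting_extension S T \<pi>"
          by (auto simp: hitting_extension_def intro!: exI[of _ D])
        then show ?thesis
          using IH D(2) \<open>finite (\<Union>\<A>)\<close> by simp
      next
        case False
        then show ?thesis
          by (intro dilutable_if_no_hitting[OF S]) blast
      qed
    qed
  qed
qed

section \<open>The value of the game\<close>

lemma INF_pimix_attained:
  fixes S :: "'a set" and T :: "'b set" and \<pi> :: "'a \<Rightarrow> 'b \<Rightarrow> bool"
  assumes "LNG_free S T \<pi>" and fin: "\<And>t. t \<in> T \<Longrightarrow> finite (Bset S \<pi> t)"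
    and p: "p \<in> distr S" and "T \<noteq> {}"
  shows "\<exists>q0\<in>distr T. pimix S T \<pi> p q0 = (INF q\<in>distr T. pimix S T \<pi> p q)"
proof -
  obtain t0 where t0: "t0 \<in> T" "\<And>t. t \<in> T \<Longrightarrow> sum p (Bset S \<pi> t) \<le> sum p (Bset S \<pi> t0)"
    using Bset_mass_max_attained[OF assms] by blast
  have "(INF q\<in>distr T. pimix S T \<pi> p q) = pimix S T \<pi> p (indicator {t0})"
  proof (rule cInf_eq_minimum)
    show "pimix S T \<pi> p (indicator {t0}) \<in> pimix S T \<pi> p ` distr T"
      using indicator_singleton_in_distr[OF t0(1)] by blast
    show "pimix S T \<pi> p (indicator {t0}) \<le> y" if "y \<in> pimix S T \<pi> p ` distr T" for y
      using that pimix_ge[OF p _ fin t0(2)] pimix_indicator_right[OF p fin t0(1)] by auto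
  qed
  then show ?thesis
    using indicator_singleton_in_distr[OF t0(1)] by auto
qed

lemma INF_pimix_le_1:
  fixes S :: "'a set" and T :: "'b set" and \<pi> :: "'a \<Rightarrow> 'b \<Rightarrow> bool"
  assumes p: "p \<in> distr S" and fin: "\<And>t. t \<in> T \<Longrightarrow> finite (Bset S \<pi> t)" and "t0 \<in> T"
  shows "(INF q\<in>distr T. pimix S T \<pi> p q) \<le> 1"
proof -
  have "bdd_below (pimix S T \<pi> p ` distr T)"
    using pimix_nonneg[OF p _ fin] by (intro bdd_belowI[of _ 0]) auto
  then have "(INF q\<in>distr T. pimix S T \<pi> p q) \<le> pimix S T \<pi> p (indicator {t0})"
    by (rule cINF_lower[OF _ indicator_singleton_in_distr[OF \<open>t0 \<in> T\<close>]])
  also have "\<dots> \<le> 1"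
    by (rule pimix_le_1[OF p indicator_singleton_in_distr[OF \<open>t0 \<in> T\<close>] fin])
  finally show ?thesis .
qed

lemma ex_INF_pimix_ge_1_minus:
  fixes S :: "'a set" and T :: "'b set" and \<pi> :: "'a \<Rightarrow> 'b \<Rightarrow> bool"
  assumes "LNG_free S T \<pi>" and fin: "\<And>t. t \<in> T \<Longrightarrow> finite (Bset S \<pi> t)"
    and "infinite S" "T \<noteq> {}" "0 < \<epsilon>"
  shows "\<exists>p\<in>distr S. 1 - \<epsilon> \<le> (INF q\<in>distr T. pimix S T \<pi> p q)"
proof -
  have "dilutable S T \<pi> {}"
    using dilutable_all[OF assms(1) fin \<open>infinite S\<close>] by simp
  from dilutableD[OF this \<open>0 < \<epsilon>\<close> finite.emptyI]
  obtain p D where p: "weights_on D p" "D \<subseteq> S" "sum p D = 1"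
    and small: "\<And>t. t \<in> T \<Longrightarrow> sum p (Bset S \<pi> t) \<le> \<epsilon>"
    by (auto simp: hits_all_def)
  have "p \<in> distr S"
    using weights_on_in_distr[OF p] .
  moreover have "1 - \<epsilon> \<le> (INF q\<in>distr T. pimix S T \<pi> p q)"
    using pimix_ge[OF \<open>p \<in> distr S\<close> _ fin small]
    by (intro cINF_greatest[OF distr_nonempty[OF \<open>T \<noteq> {}\<close>]])
  ultimately show ?thesis
    by blast
qed

lemma SUP_INF_pimix_eq_1:
  fixes S :: "'a set" and T :: "'b set" and \<pi> :: "'a \<Rightarrow> 'b \<Rightarrow> bool"
  assumes "LNG_free S T \<pi>" and fin: "\<And>t. t \<in> T \<Longrightarrow> finite (Bset S \<pi> t)"
    and S: "infinite S" and T: "T \<noteq> {}"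
  shows "(SUP p\<in>distr S. INF q\<in>distr T. pimix S T \<pi> p q) = 1"
proof -
  obtain t0 where "t0 \<in> T"
    using T by blast
  let ?val = "\<lambda>p. INF q\<in>distr T. pimix S T \<pi> p q"
  have val_le_1: "?val p \<le> 1" if "p \<in> distr S" for p
    using INF_pimix_le_1[OF that fin \<open>t0 \<in> T\<close>] .
  have "bdd_above (?val ` distr S)"
    using val_le_1 by (intro bdd_aboveI[of _ 1]) auto
  show ?thesis
  proof (rule antisym)
    show "(SUP p\<in>distr S. ?val p) \<le> 1"
      by (rule cSUP_least[OF distr_nonempty[OF infinite_imp_nonempty[OF S]] val_le_1])
    show "1 \<le> (SUP p\<in>distr S. ?val p)"
    proof (rule field_le_epsilon)
      fix \<epsilon> :: real assume "0 < \<epsilon>"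
      then obtain p where "p \<in> distr S" "1 - \<epsilon> \<le> ?val p"
        using ex_INF_pimix_ge_1_minus[OF assms] by blast
      then show "1 \<le> (SUP p\<in>distr S. ?val p) + \<epsilon>"
        using cSUP_upper[OF \<open>p \<in> distr S\<close> \<open>bdd_above (?val ` distr S)\<close>] by linarith
    qed
  qed
qed

lemma SUP_pimix_eq_1:
  fixes S :: "'a set" and T :: "'b set" and \<pi> :: "'a \<Rightarrow> 'b \<Rightarrow> bool"
  assumes S: "infinite S" and fin: "\<And>t. t \<in> T \<Longrightarrow> finite (Bset S \<pi> t)"
    and q: "q \<in> distr T"
  shows "(SUP p\<in>distr S. pimix S T \<pi> p q) = 1"
proof (rule antisym)
  have "distr S \<noteq> {}"
    using distr_nonempty infinite_imp_nonempty[OF S] .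
  then show "(SUP p\<in>distr S. pimix S T \<pi> p q) \<le> 1"
    by (rule cSUP_least) (rule pimix_le_1[OF _ q fin])
  have bdd: "bdd_above ((\<lambda>p. pimix S T \<pi> p q) ` distr S)"
    using pimix_le_1[OF _ q fin] by (intro bdd_aboveI[of _ 1]) auto
  show "1 \<le> (SUP p\<in>distr S. pimix S T \<pi> p q)"
  proof (rule field_le_epsilon)
    fix \<epsilon> :: real assume "0 < \<epsilon>"
    then obtain W where W: "finite W" "W \<subseteq> T" "dist (sum q W) 1 \<le> \<epsilon>"
      using has_sum_finite_approximation[OF distr_has_sum[OF q]] by blast
    have "finite (\<Union>t\<in>W. Bset S \<pi> t)"
      using W fin by auto
    then obtain s where s: "s \<in> S - (\<Union>t\<in>W. Bset S \<pi> t)"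
      using obtain_point_outside[OF S] by blast
    have s_distr: "indicator {s} \<in> distr S"
      using s by (simp add: indicator_singleton_in_distr)
    have "sum (indicator {s}) (Bset S \<pi> t) = (0::real)" if "t \<in> W" for t
      using s that by (intro sum.neutral) (auto simp: indicator_def)
    then have "sum q W \<le> pimix S T \<pi> (indicator {s}) q"
      using sum_le_pimix[OF s_distr q fin W(1,2)] by blast
    also have "\<dots> \<le> (SUP p\<in>distr S. pimix S T \<pi> p q)"
      by (rule cSUP_upper[OF s_distr bdd])
    finally show "1 \<le> (SUP p\<in>distr S. pimix S T \<pi> p q) + \<epsilon>"
      using W(3) by (simp add: dist_real_def abs_le_iff)
  qed
qed

lemma INF_SUP_pimix_eq_1:
  fixes S :: "'a set" and T :: "'b set" and \<pi> :: "'a \<Rightarrow> 'b \<Rightarrow> bool"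
  assumes S: "infinite S" and fin: "\<And>t. t \<in> T \<Longrightarrow> finite (Bset S \<pi> t)" and "T \<noteq> {}"
  shows "(INF q\<in>distr T. SUP p\<in>distr S. pimix S T \<pi> p q) = 1"
proof -
  have "(INF q\<in>distr T. SUP p\<in>distr S. pimix S T \<pi> p q) = (INF q\<in>distr T. 1)"
    by (rule INF_cong) (simp_all add: SUP_pimix_eq_1[OF S fin])
  also have "\<dots> = 1"
    by (rule cINF_const[OF distr_nonempty[OF \<open>T \<noteq> {}\<close>]])
  finally show ?thesis .
qed

theorem corollary2p12:
  fixes S :: "'a set" and T :: "'b set" and \<pi> :: "'a \<Rightarrow> 'b \<Rightarrow> bool"
  assumes "countable_game S T"
    and "\<forall>B\<in>B2 S T \<pi>. finite B"
    and "LNG_free S T \<pi>"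
  shows "(\<forall>p\<in>distr S. \<exists>q0\<in>distr T.
            pimix S T \<pi> p q0 = (INF q\<in>distr T. pimix S T \<pi> p q))
       \<and> (SUP p\<in>distr S. INF q\<in>distr T. pimix S T \<pi> p q) = 1
       \<and> (\<exists>q0\<in>distr T. (SUP p\<in>distr S. pimix S T \<pi> p q0)
                         = (INF q\<in>distr T. SUP p\<in>distr S. pimix S T \<pi> p q))
       \<and> (INF q\<in>distr T. SUP p\<in>distr S. pimix S T \<pi> p q) = 1"
proof -
  have S: "infinite S" and "T \<noteq> {}"
    using assms(1) by (auto simp: countable_game_def)
  have fin: "\<And>t. t \<in> T \<Longrightarrow> finite (Bset S \<pi> t)"
    using assms(2) by (simp add: B2_def)
  obtain q0 where q0: "q0 \<in> distr T"
    using distr_nonempty[OF \<open>T \<noteq> {}\<close>] by blast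
  show ?thesis
  proof (intro conjI)
    show "\<forall>p\<in>distr S. \<exists>q0\<in>distr T. pimix S T \<pi> p q0 = (INF q\<in>distr T. pimix S T \<pi> p q)"
      using INF_pimix_attained[OF assms(3) fin _ \<open>T \<noteq> {}\<close>] by blast
    show "(SUP p\<in>distr S. INF q\<in>distr T. pimix S T \<pi> p q) = 1"
      by (rule SUP_INF_pimix_eq_1[OF assms(3) fin S \<open>T \<noteq> {}\<close>])
    show "(INF q\<in>distr T. SUP p\<in>distr S. pimix S T \<pi> p q) = 1"
      by (rule INF_SUP_pimix_eq_1[OF S fin \<open>T \<noteq> {}\<close>])
    then show "\<exists>q0\<in>distr T. (SUP p\<in>distr S. pimix S T \<pi> p q0)
        = (INF q\<in>distr T. SUP p\<in>distr S. pimix S T \<pi> p q)"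
      using q0 SUP_pimix_eq_1[OF S fin q0] by metis
  qed
qed

end
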